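(* Let $\mathcal K$ be a topological Kuranishi atlas on $X$. Then the maps $|\mathrm{pr}_{\mathcal K}|:|\mathbf E_{\mathcal K}|\to|\mathcal K|$ and $|0_{\mathcal K}|,|\mathfrak s_{\mathcal K}|:|\mathcal K|\to|\mathbf E_{\mathcal K}|$ (induced by $\mathrm{pr}_I$, $0_I$, $\mathfrak s_I$) are well defined and continuous, and satisfy $|\mathrm{pr}_{\mathcal K}|\circ|\mathfrak s_{\mathcal K}|=|\mathrm{pr}_{\mathcal K}|\circ|0_{\mathcal K}|=\mathrm{id}_{|\mathcal K|}$. The set $Z:=\{p\in|\mathcal K|:|\mathfrak s_{\mathcal K}|(p)=|0_{\mathcal K}|(p)\}$ equals $\pi_{\mathcal K}\big(\bigsqcup_{I\in\mathcal I_{\mathcal K}}\{I\}\times\mathfrak s_I^{-1}(0_I)\big)$, and the quotient topology on $Z$ (obtained from $\bigsqcup_I\{I\}\times\mathfrak s_I^{-1}(0_I)$ with the relative topology, modulo the equivalence relation generated by the relations $(I,x)\sim(J,\phi_{IJ}(x))$ with $x\in U_{IJ}\cap\mathfrak s_I^{-1}(0_I)$) coincides with the subspace topology from $|\mathcal K|$. Moreover the map $\iota_{\mathcal K}:X\to|\mathcal K|$, $p\mapsto\pi_{\mathcal K}(I,\psi_I^{-1}(p))$, is independent of the choice of $I\in\mathcal I_{\mathcal K}$ with $p\in F_I$, and is a homeomorphism from $X$ onto $Z$ (with the subspace topology).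
   Context: Notation: for subsets $V'\subset V$ of a topological space, $V'\sqsubset V$ means the closure of $V'$ in $V$ is compact. $X$ is a compact metrizable space. Charts: a topological Kuranishi chart for $X$ with open footprint $F\subset X$ is a tuple $\mathbf K=(U,\mathbb E,\mathfrak s,\psi)$ where $U$ is a separable, locally compact, metrizable space; $\mathbb E$ is a separable, locally compact, metrizable space with continuous maps $\mathrm{pr}:\mathbb E\to U$ and $0:U\to\mathbb E$ with $\mathrm{pr}\circ0=\mathrm{id}_U$; $\mathfrak s:U\to\mathbb E$ is continuous with $\mathrm{pr}\circ\mathfrak s=\mathrm{id}_U$; and $\psi$ is a homeomorphism from $\mathfrak s^{-1}(0):=\{x\in U:\mathfrak s(x)=0(x)\}$ onto $F$. Coordinate changes: for charts $\mathbf K_I,\mathbf K_J$ (components indexed by $I,J$) with $F_I\cap F_J\neq\emptyset$, a coordinate change $\widehat\Phi_{IJ}:\mathbf K_I\to\mathbf K_J$ consists of an open set $U_{IJ}\subset U_I$ with $U_{IJ}\cap\mathfrak s_I^{-1}(0_I)=\psi_I^{-1}(F_I\cap F_J)$ and a topological embedding $\widehat\Phi_{IJ}:\mathrm{pr}_I^{-1}(U_{IJ})\to\mathbb E_J$ such that there is a topological embedding $\phi_{IJ}:U_{IJ}\to U_J$ with $\mathrm{pr}_J\circ\widehat\Phi_{IJ}=\phi_{IJ}\circ\mathrm{pr}_I$, $0_J\circ\phi_{IJ}=\widehat\Phi_{IJ}\circ0_I$ and $\mathfrak s_J\circ\phi_{IJ}=\widehat\Phi_{IJ}\circ\mathfrak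 s_I$ on $U_{IJ}$, and $\phi_{IJ}=\psi_J^{-1}\circ\psi_I$ on $U_{IJ}\cap\mathfrak s_I^{-1}(0_I)$. Atlases: a covering family of basic charts is a finite family $(\mathbf K_i)_{i=1,\dots,N}$ of charts whose footprints cover $X$; $\mathcal I_{\mathcal K}$ is the set of nonempty $I\subset\{1,\dots,N\}$ with $F_I:=\bigcap_{i\in I}F_i\neq\emptyset$. Transition data consist of a chart $\mathbf K_J$ with footprint $F_J$ for each $J\in\mathcal I_{\mathcal K}$ with $|J|\ge2$ (and $\mathbf K_{\{i\}}:=\mathbf K_i$), and a coordinate change $\widehat\Phi_{IJ}:\mathbf K_I\to\mathbf K_J$ for all $I\subsetneq J$ in $\mathcal I_{\mathcal K}$. We set $U_{II}:=U_I$, $\phi_{II}:=\mathrm{id}_{U_I}$. For $I\subsetneq J\subsetneq K$ let $U_{IJK}:=U_{IJ}\cap\phi_{IJ}^{-1}(U_{JK})$. The triple satisfies the weak cocycle condition if $\widehat\Phi_{JK}\circ\widehat\Phi_{IJ}=\widehat\Phi_{IK}$ on $\mathrm{pr}_I^{-1}(U_{IJK}\cap U_{IK})$; the cocycle condition if in addition $U_{IJK}\subset U_{IK}$; the strong cocycle condition if in addition $U_{IJK}=U_{IK}$. A weak topological Kuranishi atlas $\mathcal K$ is a covering family with transition data satisfying the weak cocycle condition for all such triples; a topological Kuranishi atlas is one satisfying the cocycle condition for all triples. Virtual neighbourhood: for a topological Kuranishi atlas, $|\mathcal K|$ is the quotient of $\bigsqcup_{I\in\mathcal I_{\mathcal K}}U_I=\{(I,x):x\in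 U_I\}$ by the equivalence relation generated by $(I,x)\sim(J,\phi_{IJ}(x))$ for $I\subset J$, $x\in U_{IJ}$, with the quotient topology and projection $\pi_{\mathcal K}$; similarly $|\mathbf E_{\mathcal K}|$ is the quotient of $\bigsqcup_I\mathbb E_I$ by the relation generated by $(I,e)\sim(J,\widehat\Phi_{IJ}(e))$ for $e\in\mathrm{pr}_I^{-1}(U_{IJ})$, with projection $\pi_{\mathbf E_{\mathcal K}}$. *)

theory Defs
  imports "HOL-Analysis.Analysis"
begin

definition qtop :: "'a topology \<Rightarrow> ('a \<Rightarrow> 'b) \<Rightarrow> 'b topology" where
  "qtop X f = topology (\<lambda>V. V \<subseteq> f ` topspace X \<and> openin X {x \<in> topspace X. f x \<in> V})"

lemma istopology_qtop:
  "istopology (\<lambda>V. V \<subseteq> f ` topspace X \<and> openin X {x \<in> topspace X. f x \<in> V})"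
  unfolding istopology_def
proof safe
  fix S T assume "S \<subseteq> f ` topspace X" "openin X {x \<in> topspace X. f x \<in> S}"
    "T \<subseteq> f ` topspace X" "openin X {x \<in> topspace X. f x \<in> T}"
  then show "openin X {x \<in> topspace X. f x \<in> S \<inter> T}"
  proof -
    have "{x \<in> topspace X. f x \<in> S \<inter> T} = {x \<in> topspace X. f x \<in> S} \<inter> {x \<in> topspace X. f x \<in> T}"
      by blast
    then show ?thesis using \<open>openin X {x \<in> topspace X. f x \<in> S}\<close> \<open>openin X {x \<in> topspace X. f x \<in> T}\<close>
      by (simp add: openin_Int)
  qed
next
  fix K assume K: "\<forall>V\<in>K. V \<subseteq> f ` topspace X \<and> openin X {x \<in> topspace X. f x \<in> V}"
  have "{x \<in> topspace X. f x \<in> \<Union>K} = (\<Union>V\<in>K. {x \<in> topspace X. f x \<in> V})" by auto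
  then show "openin X {x \<in> topspace X. f x \<in> \<Union>K}" using K by auto
qed auto

lemma openin_qtop:
  "openin (qtop X f) V \<longleftrightarrow> V \<subseteq> f ` topspace X \<and> openin X {x \<in> topspace X. f x \<in> V}"
  unfolding qtop_def by (simp add: topology_inverse' istopology_qtop)

lemma topspace_qtop: "topspace (qtop X f) = f ` topspace X"
proof -
  have "{x \<in> topspace X. f x \<in> f ` topspace X} = topspace X" by blast
  then have "openin (qtop X f) (f ` topspace X)" by (simp add: openin_qtop)
  then show ?thesis using openin_subset openin_qtop
    by (metis openin_topspace subset_antisym)
qed

definition eqclass :: "('a \<times> 'a) set \<Rightarrow> 'a \<Rightarrow> 'a set" where
  "eqclass B p = (B \<union> converse B)\<^sup>* `` {p}"

text \<open>Chart components are indexed by index sets I (sets of natural numbers); all domains U_I share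
  a carrier type 'u and all bundles E_I a carrier type 'e.\<close>
record ('x, 'u, 'e) katlas =
  kN :: nat
  kF :: "nat set \<Rightarrow> 'x set"
  kU :: "nat set \<Rightarrow> 'u topology"
  kE :: "nat set \<Rightarrow> 'e topology"
  kpr :: "nat set \<Rightarrow> 'e \<Rightarrow> 'u"
  kzero :: "nat set \<Rightarrow> 'u \<Rightarrow> 'e"
  ks :: "nat set \<Rightarrow> 'u \<Rightarrow> 'e"
  kpsi :: "nat set \<Rightarrow> 'u \<Rightarrow> 'x"
  kUU :: "nat set \<Rightarrow> nat set \<Rightarrow> 'u set"
  kPhi :: "nat set \<Rightarrow> nat set \<Rightarrow> 'e \<Rightarrow> 'e"
  kphi :: "nat set \<Rightarrow> nat set \<Rightarrow> 'u \<Rightarrow> 'u"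

definition zset :: "'u topology \<Rightarrow> ('u \<Rightarrow> 'e) \<Rightarrow> ('u \<Rightarrow> 'e) \<Rightarrow> 'u set" where
  "zset U z s = {x \<in> topspace U. s x = z x}"

definition top_kchart ::
  "'x topology \<Rightarrow> 'x set \<Rightarrow> 'u topology \<Rightarrow> 'e topology \<Rightarrow> ('e \<Rightarrow> 'u) \<Rightarrow> ('u \<Rightarrow> 'e)
     \<Rightarrow> ('u \<Rightarrow> 'e) \<Rightarrow> ('u \<Rightarrow> 'x) \<Rightarrow> bool" where
  "top_kchart X F U E pr z s psi \<longleftrightarrow>
     openin X F \<and>
     separable_space U \<and> locally_compact_space U \<and> metrizable_space U \<and>
     separable_space E \<and> locally_compact_space E \<and> metrizable_space E \<and>
     continuous_map E U pr \<and> continuous_map U E z \<and> (\<forall>x\<in>topspace U. pr (z x) = x) \<and>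
     continuous_map U E s \<and> (\<forall>x\<in>topspace U. pr (s x) = x) \<and>
     homeomorphic_map (subtopology U (zset U z s)) (subtopology X F) psi"

definition katlas_chart :: "'x topology \<Rightarrow> ('x, 'u, 'e, 'z) katlas_scheme \<Rightarrow> nat set \<Rightarrow> bool" where
  "katlas_chart X K I = top_kchart X (kF K I) (kU K I) (kE K I) (kpr K I) (kzero K I) (ks K I) (kpsi K I)"

abbreviation kzs :: "('x, 'u, 'e, 'z) katlas_scheme \<Rightarrow> nat set \<Rightarrow> 'u set" where
  "kzs K I \<equiv> zset (kU K I) (kzero K I) (ks K I)"

definition top_coord_change :: "('x, 'u, 'e, 'z) katlas_scheme \<Rightarrow> nat set \<Rightarrow> nat set \<Rightarrow> bool" where
  "top_coord_change K I J \<longleftrightarrow>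
     openin (kU K I) (kUU K I J) \<and>
     kUU K I J \<inter> kzs K I = {x \<in> kzs K I. kpsi K I x \<in> kF K I \<inter> kF K J} \<and>
     embedding_map (subtopology (kE K I) {e \<in> topspace (kE K I). kpr K I e \<in> kUU K I J})
                   (kE K J) (kPhi K I J) \<and>
     embedding_map (subtopology (kU K I) (kUU K I J)) (kU K J) (kphi K I J) \<and>
     (\<forall>e\<in>topspace (kE K I). kpr K I e \<in> kUU K I J \<longrightarrow>
        kpr K J (kPhi K I J e) = kphi K I J (kpr K I e)) \<and>
     (\<forall>x\<in>kUU K I J. kzero K J (kphi K I J x) = kPhi K I J (kzero K I x)) \<and>
     (\<forall>x\<in>kUU K I J. ks K J (kphi K I J x) = kPhi K I J (ks K I x)) \<and>
     (\<forall>x\<in>kUU K I J \<inter> kzs K I. kphi K I J x = inv_into (kzs K J) (kpsi K J) (kpsi K I x))"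

definition kindex :: "('x, 'u, 'e, 'z) katlas_scheme \<Rightarrow> nat set set" where
  "kindex K = {I. I \<noteq> {} \<and> I \<subseteq> {1..kN K} \<and> (\<Inter>i\<in>I. kF K {i}) \<noteq> {}}"

definition kUUU :: "('x, 'u, 'e, 'z) katlas_scheme \<Rightarrow> nat set \<Rightarrow> nat set \<Rightarrow> nat set \<Rightarrow> 'u set" where
  "kUUU K I J L = {x \<in> kUU K I J. kphi K I J x \<in> kUU K J L}"

definition top_kuranishi_atlas :: "'x topology \<Rightarrow> ('x, 'u, 'e, 'z) katlas_scheme \<Rightarrow> bool" where
  "top_kuranishi_atlas X K \<longleftrightarrow>
     \<comment> \<open>covering family of basic charts\<close>
     (\<forall>i\<in>{1..kN K}. katlas_chart X K {i}) \<and>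
     (\<Union>i\<in>{1..kN K}. kF K {i}) = topspace X \<and>
     \<comment> \<open>transition charts, with footprint F_J = intersection of basic footprints\<close>
     (\<forall>J\<in>kindex K. kF K J = (\<Inter>i\<in>J. kF K {i}) \<and> katlas_chart X K J) \<and>
     \<comment> \<open>coordinate changes\<close>
     (\<forall>I\<in>kindex K. \<forall>J\<in>kindex K. I \<subset> J \<longrightarrow> top_coord_change K I J) \<and>
     \<comment> \<open>cocycle condition\<close>
     (\<forall>I\<in>kindex K. \<forall>J\<in>kindex K. \<forall>L\<in>kindex K. I \<subset> J \<and> J \<subset> L \<longrightarrow>
        (\<forall>e\<in>topspace (kE K I). kpr K I e \<in> kUUU K I J L \<inter> kUU K I L \<longrightarrow>
            kPhi K J L (kPhi K I J e) = kPhi K I L e) \<and>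
        kUUU K I J L \<subseteq> kUU K I L)"

definition kdisjU :: "('x, 'u, 'e, 'z) katlas_scheme \<Rightarrow> (nat set \<times> 'u) topology" where
  "kdisjU K = sum_topology (kU K) (kindex K)"

definition kdisjE :: "('x, 'u, 'e, 'z) katlas_scheme \<Rightarrow> (nat set \<times> 'e) topology" where
  "kdisjE K = sum_topology (kE K) (kindex K)"

text \<open>generating relations (I,x) ~ (J, phi_IJ x), I \<subset> J; the case I = J (identity) is
  covered by reflexivity of the generated equivalence relation.\<close>
definition krelU :: "('x, 'u, 'e, 'z) katlas_scheme \<Rightarrow> ((nat set \<times> 'u) \<times> (nat set \<times> 'u)) set" where
  "krelU K = {((I, x), (J, kphi K I J x)) | I J x.
                I \<in> kindex K \<and> J \<in> kindex K \<and> I \<subset> J \<and> x \<in> kUU K I J}"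

definition krelE :: "('x, 'u, 'e, 'z) katlas_scheme \<Rightarrow> ((nat set \<times> 'e) \<times> (nat set \<times> 'e)) set" where
  "krelE K = {((I, e), (J, kPhi K I J e)) | I J e.
                I \<in> kindex K \<and> J \<in> kindex K \<and> I \<subset> J \<and> e \<in> topspace (kE K I) \<and> kpr K I e \<in> kUU K I J}"

definition krelZ :: "('x, 'u, 'e, 'z) katlas_scheme \<Rightarrow> ((nat set \<times> 'u) \<times> (nat set \<times> 'u)) set" where
  "krelZ K = {((I, x), (J, kphi K I J x)) | I J x.
                I \<in> kindex K \<and> J \<in> kindex K \<and> I \<subset> J \<and> x \<in> kUU K I J \<inter> kzs K I}"

definition kpiK :: "('x, 'u, 'e, 'z) katlas_scheme \<Rightarrow> nat set \<times> 'u \<Rightarrow> (nat set \<times> 'u) set" where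
  "kpiK K = eqclass (krelU K)"

definition kpiE :: "('x, 'u, 'e, 'z) katlas_scheme \<Rightarrow> nat set \<times> 'e \<Rightarrow> (nat set \<times> 'e) set" where
  "kpiE K = eqclass (krelE K)"

definition kvirt :: "('x, 'u, 'e, 'z) katlas_scheme \<Rightarrow> (nat set \<times> 'u) set topology" where
  "kvirt K = qtop (kdisjU K) (kpiK K)"

definition kvirtE :: "('x, 'u, 'e, 'z) katlas_scheme \<Rightarrow> (nat set \<times> 'e) set topology" where
  "kvirtE K = qtop (kdisjE K) (kpiE K)"

definition kdisjZ :: "('x, 'u, 'e, 'z) katlas_scheme \<Rightarrow> (nat set \<times> 'u) topology" where
  "kdisjZ K = subtopology (kdisjU K) (SIGMA I:kindex K. kzs K I)"

definition kquotZ :: "('x, 'u, 'e, 'z) katlas_scheme \<Rightarrow> (nat set \<times> 'u) set topology" where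
  "kquotZ K = qtop (kdisjZ K) (eqclass (krelZ K))"

definition kprD :: "('x, 'u, 'e, 'z) katlas_scheme \<Rightarrow> nat set \<times> 'e \<Rightarrow> nat set \<times> 'u" where
  "kprD K = (\<lambda>(I, e). (I, kpr K I e))"

definition kzeroD :: "('x, 'u, 'e, 'z) katlas_scheme \<Rightarrow> nat set \<times> 'u \<Rightarrow> nat set \<times> 'e" where
  "kzeroD K = (\<lambda>(I, x). (I, kzero K I x))"

definition ksD :: "('x, 'u, 'e, 'z) katlas_scheme \<Rightarrow> nat set \<times> 'u \<Rightarrow> nat set \<times> 'e" where
  "ksD K = (\<lambda>(I, x). (I, ks K I x))"

definition kprV :: "('x, 'u, 'e, 'z) katlas_scheme \<Rightarrow> (nat set \<times> 'e) set \<Rightarrow> (nat set \<times> 'u) set" where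
  "kprV K c = kpiK K (kprD K (SOME p. p \<in> c))"

definition kzeroV :: "('x, 'u, 'e, 'z) katlas_scheme \<Rightarrow> (nat set \<times> 'u) set \<Rightarrow> (nat set \<times> 'e) set" where
  "kzeroV K c = kpiE K (kzeroD K (SOME p. p \<in> c))"

definition ksV :: "('x, 'u, 'e, 'z) katlas_scheme \<Rightarrow> (nat set \<times> 'u) set \<Rightarrow> (nat set \<times> 'e) set" where
  "ksV K c = kpiE K (ksD K (SOME p. p \<in> c))"

definition kiotaI :: "('x, 'u, 'e, 'z) katlas_scheme \<Rightarrow> nat set \<Rightarrow> 'x \<Rightarrow> (nat set \<times> 'u) set" where
  "kiotaI K I p = kpiK K (I, inv_into (kzs K I) (kpsi K I) p)"

definition kiota :: "('x, 'u, 'e, 'z) katlas_scheme \<Rightarrow> 'x \<Rightarrow> (nat set \<times> 'u) set" where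
  "kiota K p = kiotaI K (SOME I. I \<in> kindex K \<and> p \<in> kF K I) p"

end

theory Submission
  imports Defs
begin

text \<open>The coordinate changes intertwine pr, 0 and s, so these maps send generating relations to
  generating relations and descend to the quotients. Since the bundle coordinate changes are
  injective, lying on the zero section is invariant under the relation generated on the bundles, which
  identifies Z with the image of the zero sets; likewise the footprint point psi_I(x) of a zero x is
  invariant under the relation generated on the domains. This makes iota injective, and makes the
  preimage of a closed subset of X a closed saturated subset of the disjoint union, whence iota is open
  onto Z. Any two lifts of a point of X are related through the chart indexed by the union of their
  index sets, so iota is well defined and continuous. Finally, the comparison map from the quotient of
  the zero sets onto Z, precomposed with the continuous surjective lift from X, is the homeomorphism
  iota, hence is itself a homeomorphism.\<close>

section \<open>Generated equivalence relations\<close>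

abbreviation eqgen :: "('a \<times> 'a) set \<Rightarrow> ('a \<times> 'a) set" where
  "eqgen B \<equiv> (B \<union> B\<inverse>)\<^sup>*"

lemma sym_eqgen: "sym (eqgen B)"
  by (rule sym_rtrancl[OF sym_Un_converse])

lemma eqgen_sym: "(a, b) \<in> eqgen B \<Longrightarrow> (b, a) \<in> eqgen B"
  using sym_eqgen by (rule symD)

lemma mem_eqclass [simp]: "b \<in> eqclass B a \<longleftrightarrow> (a, b) \<in> eqgen B"
  by (simp add: eqclass_def)

lemma eqclass_eq_iff: "eqclass B a = eqclass B b \<longleftrightarrow> (a, b) \<in> eqgen B"
proof -
  have "equiv UNIV (eqgen B)"
    by (simp add: equiv_def refl_rtrancl sym_eqgen trans_rtrancl)
  then show ?thesis
    unfolding eqclass_def by (simp add: eq_equiv_class_iff)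
qed

lemma eqgen_some_eqclass: "(a, SOME b. b \<in> eqclass B a) \<in> eqgen B"
  using someI[of "\<lambda>b. b \<in> eqclass B a" a] by simp

lemma eqgen_map:
  assumes "\<And>a b. (a, b) \<in> B \<Longrightarrow> (f a, f b) \<in> eqgen C"
  shows "(a, b) \<in> eqgen B \<Longrightarrow> (f a, f b) \<in> eqgen C"
proof (induction rule: rtrancl_induct)
  case (step y z)
  from step.hyps(2) have "(f y, f z) \<in> eqgen C"
  proof
    assume "(y, z) \<in> B\<inverse>"
    then show ?thesis
      by (simp add: assms eqgen_sym)
  qed (rule assms)
  with step.IH show ?case
    by (rule rtrancl_trans)
qed simp

lemma eqgen_invariant:
  assumes "\<And>a b. (a, b) \<in> B \<Longrightarrow> f a = f b"
  shows "(a, b) \<in> eqgen B \<Longrightarrow> f a = f b"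
proof (induction rule: rtrancl_induct)
  case (step y z)
  then show ?case
    using assms by (metis UnE converseD)
qed simp

lemma image_diff_saturated:
  assumes "\<And>a b. f a = f b \<Longrightarrow> b \<in> Q \<Longrightarrow> a \<in> Q"
  shows "f ` (S - Q) = f ` S - f ` Q"
  using assms by (auto simp: image_iff)

section \<open>Quotient and sum topologies\<close>

lemma continuous_map_qtop: "continuous_map X (qtop X f) f"
  by (auto simp: continuous_map_def openin_qtop topspace_qtop)

lemma continuous_map_from_qtop:
  assumes k: "continuous_map X Y k" and gk: "\<And>x. x \<in> topspace X \<Longrightarrow> g (f x) = k x"
  shows "continuous_map (qtop X f) Y g"
  unfolding continuous_map_def
proof (intro conjI allI impI)
  show "g \<in> topspace (qtop X f) \<rightarrow> topspace Y"
    using k gk by (auto simp: topspace_qtop continuous_map_def)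
  fix U assume U: "openin Y U"
  have "{x \<in> topspace X. f x \<in> {c \<in> topspace (qtop X f). g c \<in> U}} = {x \<in> topspace X. k x \<in> U}"
    using gk by (auto simp: topspace_qtop) metis
  moreover have "openin X {x \<in> topspace X. k x \<in> U}"
    using k U by (simp add: continuous_map_def)
  ultimately show "openin (qtop X f) {c \<in> topspace (qtop X f). g c \<in> U}"
    by (simp add: openin_qtop topspace_qtop)
qed

lemma continuous_map_between_qtops:
  assumes "continuous_map X Y h" and "\<And>x. x \<in> topspace X \<Longrightarrow> g (p x) = q (h x)"
  shows "continuous_map (qtop X p) (qtop Y q) g"
  using continuous_map_compose[OF assms(1) continuous_map_qtop[where f=q]]
  by (rule continuous_map_from_qtop) (simp add: assms(2))

lemma closedin_qtop_saturated:
  assumes S: "closedin X S"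
    and sat: "\<And>a b. a \<in> topspace X \<Longrightarrow> b \<in> S \<Longrightarrow> f a = f b \<Longrightarrow> a \<in> S"
  shows "closedin (qtop X f) (f ` S)"
proof -
  have S_sub: "S \<subseteq> topspace X"
    using S by (rule closedin_subset)
  have "{x \<in> topspace X. f x \<in> f ` topspace X - f ` S} = topspace X - S"
    using sat S_sub by blast
  then have "openin (qtop X f) (f ` topspace X - f ` S)"
    using S by (simp add: openin_qtop closedin_def)
  then show ?thesis
    using S_sub by (simp add: closedin_def topspace_qtop image_mono)
qed

lemma continuous_map_from_sum_topology:
  assumes "\<And>i. i \<in> I \<Longrightarrow> continuous_map (X i) Y (\<lambda>x. f (i, x))"
  shows "continuous_map (sum_topology X I) Y f"
  unfolding continuous_map_def
proof (intro conjI allI impI)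
  show "f \<in> topspace (sum_topology X I) \<rightarrow> topspace Y"
    using assms by (force simp: continuous_map_def)
  fix U assume "openin Y U"
  then have "openin (X i) {x \<in> topspace (X i). f (i, x) \<in> U}" if "i \<in> I" for i
    using assms[OF that] by (simp add: continuous_map_def)
  moreover have "{x. (i, x) \<in> {p \<in> topspace (sum_topology X I). f p \<in> U}}
      = {x \<in> topspace (X i). f (i, x) \<in> U}" if "i \<in> I" for i
    using that by auto
  ultimately show "openin (sum_topology X I) {p \<in> topspace (sum_topology X I). f p \<in> U}"
    unfolding openin_sum_topology by auto
qed

lemma continuous_map_sum_map:
  assumes "\<And>i. i \<in> I \<Longrightarrow> continuous_map (X i) (Y i) (f i)"
  shows "continuous_map (sum_topology X I) (sum_topology Y I) (\<lambda>(i, x). (i, f i x))"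
proof (rule continuous_map_from_sum_topology)
  fix i assume i: "i \<in> I"
  show "continuous_map (X i) (sum_topology Y I) (\<lambda>x. case (i, x) of (i, x) \<Rightarrow> (i, f i x))"
    using continuous_map_compose[OF assms[OF i] continuous_map_component_injection[where X=Y, OF i]]
    by (simp add: o_def)
qed

lemma continuous_map_inv_into_homeomorphic:
  assumes "homeomorphic_map X Y f"
  shows "continuous_map Y X (inv_into (topspace X) f)"
proof -
  have f: "open_map X Y f" "f ` topspace X = topspace Y" "inj_on f (topspace X)"
    using assms by (auto simp: homeomorphic_eq_everything_map)
  have "open_map X Y f \<longleftrightarrow> continuous_map Y X (inv_into (topspace X) f)"
  proof (rule open_eq_continuous_inverse_map)
    show "f x \<in> topspace Y \<and> inv_into (topspace X) f (f x) = x" if "x \<in> topspace X" for x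
      using that by (simp add: f(2)[symmetric] inv_into_f_f[OF f(3)])
    show "inv_into (topspace X) f y \<in> topspace X \<and> f (inv_into (topspace X) f y) = y"
      if "y \<in> topspace Y" for y
      using f(2) that by (simp add: inv_into_into f_inv_into_f)
  qed
  with f show ?thesis
    by simp
qed

lemma embedding_map_imp_inj_image:
  "embedding_map X Y f \<Longrightarrow> inj_on f (topspace X) \<and> f ` topspace X \<subseteq> topspace Y"
proof -
  assume "embedding_map X Y f"
  then have f: "homeomorphic_map X (subtopology Y (f ` topspace X)) f"
    by (simp add: embedding_map_def)
  have "f ` topspace X = topspace Y \<inter> f ` topspace X"
    using homeomorphic_imp_surjective_map[OF f] unfolding topspace_subtopology .
  then show ?thesis
    using homeomorphic_imp_injective_map[OF f] by blast
qed

lemma homeomorphic_map_of_factor: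
  assumes h: "continuous_map X Y h" "h ` topspace X = topspace Y"
    and g: "continuous_map Y Z g" and gh: "homeomorphic_map X Z (g \<circ> h)"
  shows "homeomorphic_map Y Z g"
proof -
  obtain k where k: "homeomorphic_maps X Z (g \<circ> h) k"
    using gh homeomorphic_map_maps by blast
  have "homeomorphic_maps Y Z g (h \<circ> k)"
    unfolding homeomorphic_maps_def
  proof (intro conjI ballI)
    show "continuous_map Z Y (h \<circ> k)"
      using k h(1) by (auto simp: homeomorphic_maps_def intro: continuous_map_compose)
    fix y assume "y \<in> topspace Y"
    then obtain x where "x \<in> topspace X" "y = h x"
      using h(2) by blast
    then show "(h \<circ> k) (g y) = y"
      using k by (simp add: homeomorphic_maps_def)
  next
    fix z assume "z \<in> topspace Z"
    then show "g ((h \<circ> k) z) = z"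
      using k by (simp add: homeomorphic_maps_def)
  qed (rule g)
  then show ?thesis
    by (rule homeomorphic_maps_imp_map)
qed

section \<open>Charts and coordinate changes\<close>

abbreviation kzeros :: "('x, 'u, 'e, 'z) katlas_scheme \<Rightarrow> (nat set \<times> 'u) set" where
  "kzeros K \<equiv> SIGMA I:kindex K. kzs K I"

definition kpsiD :: "('x, 'u, 'e, 'z) katlas_scheme \<Rightarrow> nat set \<times> 'u \<Rightarrow> 'x" where
  "kpsiD K = (\<lambda>(I, x). kpsi K I x)"

text \<open>None off the zero sets, so that a single invariant of the generated relation records both
  membership in the zero sets and the footprint point.\<close>
definition kzero_point :: "('x, 'u, 'e, 'z) katlas_scheme \<Rightarrow> nat set \<times> 'u \<Rightarrow> 'x option" where
  "kzero_point K a = (if a \<in> kzeros K then Some (kpsiD K a) else None)"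

lemma kzero_point_eq_Some: "kzero_point K a = Some p \<longleftrightarrow> a \<in> kzeros K \<and> kpsiD K a = p"
  by (auto simp: kzero_point_def)

definition on_zero_section :: "('x, 'u, 'e, 'z) katlas_scheme \<Rightarrow> nat set \<times> 'e \<Rightarrow> bool" where
  "on_zero_section K = (\<lambda>(I, e). kzero K I (kpr K I e) = e)"

definition kzero_lift :: "('x, 'u, 'e, 'z) katlas_scheme \<Rightarrow> nat set \<Rightarrow> 'x \<Rightarrow> nat set \<times> 'u" where
  "kzero_lift K I p = (I, inv_into (kzs K I) (kpsi K I) p)"

definition kchart_at :: "('x, 'u, 'e, 'z) katlas_scheme \<Rightarrow> 'x \<Rightarrow> nat set" where
  "kchart_at K p = (SOME I. I \<in> kindex K \<and> p \<in> kF K I)"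

lemma kiotaI_alt_def: "kiotaI K I p = kpiK K (kzero_lift K I p)"
  by (simp add: kiotaI_def kzero_lift_def)

lemma kiota_alt_def: "kiota K p = kpiK K (kzero_lift K (kchart_at K p) p)"
  by (simp add: kiota_def kiotaI_def kzero_lift_def kchart_at_def)

lemma zset_subset: "zset U z s \<subseteq> topspace U"
  by (auto simp: zset_def)

lemma topspace_kdisjU: "topspace (kdisjU K) = (SIGMA I:kindex K. topspace (kU K I))"
  by (simp add: kdisjU_def o_def)

lemma topspace_kvirt: "topspace (kvirt K) = kpiK K ` topspace (kdisjU K)"
  by (simp add: kvirt_def topspace_qtop)

lemma kdisjZ_sum_topology:
  "kdisjZ K = sum_topology (\<lambda>I. subtopology (kU K I) (kzs K I)) (kindex K)"
  by (simp add: kdisjZ_def kdisjU_def subtopology_sum_topology)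

lemma topspace_kdisjZ: "topspace (kdisjZ K) = kzeros K"
  unfolding kdisjZ_def topspace_subtopology topspace_kdisjU
  by (auto simp: zset_def)

lemma krelZ_subset_krelU: "krelZ K \<subseteq> krelU K"
  unfolding krelZ_def krelU_def by blast

lemma eqgen_krelZ_subset: "eqgen (krelZ K) \<subseteq> eqgen (krelU K)"
  by (rule rtrancl_mono) (use krelZ_subset_krelU in blast)

locale top_katlas =
  fixes X :: "'x topology" and K :: "('x, 'u, 'e) katlas"
  assumes atlas: "top_kuranishi_atlas X K"
begin

lemma atlas_covering: "(\<Union>i\<in>{1..kN K}. kF K {i}) = topspace X"
  using atlas unfolding top_kuranishi_atlas_def by (elim conjE) assumption

lemma atlas_charts: "\<forall>I\<in>kindex K. kF K I = (\<Inter>i\<in>I. kF K {i}) \<and> katlas_chart X K I"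
  using atlas unfolding top_kuranishi_atlas_def by (elim conjE) assumption

lemma atlas_coord_changes: "\<forall>I\<in>kindex K. \<forall>J\<in>kindex K. I \<subset> J \<longrightarrow> top_coord_change K I J"
  using atlas unfolding top_kuranishi_atlas_def by (elim conjE) assumption

lemma kindex_chart: "I \<in> kindex K \<Longrightarrow>
    top_kchart X (kF K I) (kU K I) (kE K I) (kpr K I) (kzero K I) (ks K I) (kpsi K I)"
  using atlas_charts unfolding katlas_chart_def by blast

lemma footprint_eq: "I \<in> kindex K \<Longrightarrow> kF K I = (\<Inter>i\<in>I. kF K {i})"
  using atlas_charts by simp

lemma exists_chart:
  assumes "p \<in> topspace X"
  shows "\<exists>I\<in>kindex K. p \<in> kF K I"
proof -
  obtain i where i: "i \<in> {1..kN K}" "p \<in> kF K {i}"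
    using assms atlas_covering by blast
  then have "{i} \<in> kindex K"
    by (auto simp: kindex_def)
  with i show ?thesis
    by blast
qed

lemma kchart_at: "p \<in> topspace X \<Longrightarrow> kchart_at K p \<in> kindex K \<and> p \<in> kF K (kchart_at K p)"
  unfolding kchart_at_def using exists_chart by (rule someI2_bex)

context
  fixes I assumes I: "I \<in> kindex K"
begin

lemma openin_footprint: "openin X (kF K I)"
  using kindex_chart[OF I] by (simp add: top_kchart_def)

lemma continuous_map_kpr: "continuous_map (kE K I) (kU K I) (kpr K I)"
  using kindex_chart[OF I] by (simp add: top_kchart_def)

lemma continuous_map_kzero: "continuous_map (kU K I) (kE K I) (kzero K I)"
  using kindex_chart[OF I] by (simp add: top_kchart_def)

lemma continuous_map_ks: "continuous_map (kU K I) (kE K I) (ks K I)"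
  using kindex_chart[OF I] by (simp add: top_kchart_def)

lemma kpr_kzero: "x \<in> topspace (kU K I) \<Longrightarrow> kpr K I (kzero K I x) = x"
  using kindex_chart[OF I] by (simp add: top_kchart_def)

lemma kpr_ks: "x \<in> topspace (kU K I) \<Longrightarrow> kpr K I (ks K I x) = x"
  using kindex_chart[OF I] by (simp add: top_kchart_def)

lemma homeomorphic_map_kpsi:
  "homeomorphic_map (subtopology (kU K I) (kzs K I)) (subtopology X (kF K I)) (kpsi K I)"
  using kindex_chart[OF I] by (simp add: top_kchart_def)

lemma closedin_kzs: "closedin (kU K I) (kzs K I)"
proof -
  have "Hausdorff_space (kE K I)"
    using kindex_chart[OF I] by (simp add: top_kchart_def metrizable_imp_Hausdorff_space)
  then show ?thesis
    unfolding zset_def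
    by (rule closedin_continuous_maps_eq[OF _ continuous_map_ks continuous_map_kzero])
qed

lemma kpsi_bij: "bij_betw (kpsi K I) (kzs K I) (kF K I)"
  using homeomorphic_map_kpsi openin_subset[OF openin_footprint]
  by (simp add: homeomorphic_eq_everything_map bij_betw_def Int_absorb1 zset_subset)

lemma kpsi_in_footprint: "x \<in> kzs K I \<Longrightarrow> kpsi K I x \<in> kF K I"
  using kpsi_bij by (rule bij_betw_apply)

lemma kzero_lift_kpsi: "x \<in> kzs K I \<Longrightarrow> kzero_lift K I (kpsi K I x) = (I, x)"
  using kpsi_bij by (simp add: kzero_lift_def bij_betw_inv_into_left)

lemma kzero_lift_in_kzeros: "p \<in> kF K I \<Longrightarrow> kzero_lift K I p \<in> kzeros K"
  using I bij_betw_inv_into[OF kpsi_bij] by (auto simp: kzero_lift_def bij_betw_def)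

lemma kzero_point_kzero_lift: "p \<in> kF K I \<Longrightarrow> kzero_point K (kzero_lift K I p) = Some p"
  using kzero_lift_in_kzeros kpsi_bij
  by (simp add: kzero_point_def kpsiD_def kzero_lift_def bij_betw_inv_into_right)

lemma continuous_map_kzero_lift:
  "continuous_map (subtopology X (kF K I)) (kdisjZ K) (kzero_lift K I)"
proof -
  have "continuous_map (subtopology X (kF K I)) (subtopology (kU K I) (kzs K I))
      (inv_into (kzs K I) (kpsi K I))"
    using continuous_map_inv_into_homeomorphic[OF homeomorphic_map_kpsi]
    by (simp add: Int_absorb1 zset_subset)
  then show ?thesis
    unfolding kzero_lift_def kdisjZ_sum_topology
    using continuous_map_compose[OF _ continuous_map_component_injection[OF I]]
    by (simp add: o_def)
qed

end

context
  fixes I J assumes I: "I \<in> kindex K" and J: "J \<in> kindex K" and IJ: "I \<subset> J"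
begin

lemma top_coord_change: "top_coord_change K I J"
  using atlas_coord_changes I J IJ by blast

lemma openin_kUU: "openin (kU K I) (kUU K I J)"
  using top_coord_change unfolding top_coord_change_def by (elim conjE) assumption

lemma kUU_kzs: "kUU K I J \<inter> kzs K I = {x \<in> kzs K I. kpsi K I x \<in> kF K I \<inter> kF K J}"
  using top_coord_change unfolding top_coord_change_def by (elim conjE) assumption

lemma embedding_map_kPhi: "embedding_map
    (subtopology (kE K I) {e \<in> topspace (kE K I). kpr K I e \<in> kUU K I J}) (kE K J) (kPhi K I J)"
  using top_coord_change unfolding top_coord_change_def by (elim conjE) assumption

lemma embedding_map_kphi: "embedding_map (subtopology (kU K I) (kUU K I J)) (kU K J) (kphi K I J)"
  using top_coord_change unfolding top_coord_change_def by (elim conjE) assumption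

lemma kpr_kPhi_all: "\<forall>e\<in>topspace (kE K I). kpr K I e \<in> kUU K I J \<longrightarrow>
    kpr K J (kPhi K I J e) = kphi K I J (kpr K I e)"
  using top_coord_change unfolding top_coord_change_def by (elim conjE) assumption

lemma kzero_kphi_all: "\<forall>x\<in>kUU K I J. kzero K J (kphi K I J x) = kPhi K I J (kzero K I x)"
  using top_coord_change unfolding top_coord_change_def by (elim conjE) assumption

lemma ks_kphi_all: "\<forall>x\<in>kUU K I J. ks K J (kphi K I J x) = kPhi K I J (ks K I x)"
  using top_coord_change unfolding top_coord_change_def by (elim conjE) assumption

lemma kphi_kzs_all: "\<forall>x\<in>kUU K I J \<inter> kzs K I. kphi K I J x = inv_into (kzs K J) (kpsi K J) (kpsi K I x)"
  using top_coord_change unfolding top_coord_change_def by (elim conjE) assumption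

lemmas kpr_kPhi = kpr_kPhi_all[rule_format]
lemmas kzero_kphi = kzero_kphi_all[rule_format]
lemmas ks_kphi = ks_kphi_all[rule_format]
lemmas kphi_kzs = kphi_kzs_all[rule_format]

lemma kUU_kzs_iff: "x \<in> kzs K I \<Longrightarrow> x \<in> kUU K I J \<longleftrightarrow> kpsi K I x \<in> kF K J"
  using kUU_kzs kpsi_in_footprint[OF I] by blast

lemma kUU_subset: "kUU K I J \<subseteq> topspace (kU K I)"
  using openin_kUU by (rule openin_subset)

lemma kphi_in_topspace: "x \<in> kUU K I J \<Longrightarrow> kphi K I J x \<in> topspace (kU K J)"
  using embedding_map_imp_inj_image[OF embedding_map_kphi] kUU_subset by auto

lemma inj_on_kPhi: "inj_on (kPhi K I J) {e \<in> topspace (kE K I). kpr K I e \<in> kUU K I J}"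
  using embedding_map_imp_inj_image[OF embedding_map_kPhi] by (simp add: inf.absorb2 Collect_subset)

text \<open>The coordinate change on the bundle is injective, so it detects the zero set.\<close>
lemma kphi_in_kzs_iff:
  assumes x: "x \<in> kUU K I J"
  shows "kphi K I J x \<in> kzs K J \<longleftrightarrow> x \<in> kzs K I"
proof -
  have xU: "x \<in> topspace (kU K I)"
    using x kUU_subset by blast
  have "ks K I x \<in> {e \<in> topspace (kE K I). kpr K I e \<in> kUU K I J}"
       "kzero K I x \<in> {e \<in> topspace (kE K I). kpr K I e \<in> kUU K I J}"
    using x xU continuous_map_ks[OF I] continuous_map_kzero[OF I] kpr_ks[OF I] kpr_kzero[OF I]
    by (auto dest: continuous_map_image_subset_topspace)
  then have "kPhi K I J (ks K I x) = kPhi K I J (kzero K I x) \<longleftrightarrow> ks K I x = kzero K I x"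
    by (rule inj_on_eq_iff[OF inj_on_kPhi])
  then show ?thesis
    using x xU kphi_in_topspace ks_kphi kzero_kphi by (simp add: zset_def)
qed

end

section \<open>The induced maps on the virtual neighbourhood\<close>

lemma krelU_kzero_point:
  assumes "(a, b) \<in> krelU K"
  shows "kzero_point K a = kzero_point K b"
proof -
  obtain I J x where I: "I \<in> kindex K" and J: "J \<in> kindex K" and IJ: "I \<subset> J"
    and x: "x \<in> kUU K I J" and ab: "a = (I, x)" "b = (J, kphi K I J x)"
    using assms unfolding krelU_def by blast
  have "kpsi K J (kphi K I J x) = kpsi K I x" if "x \<in> kzs K I"
    using that x kphi_kzs[OF I J IJ] kUU_kzs_iff[OF I J IJ] kpsi_bij[OF J]
    by (simp add: bij_betw_inv_into_right)
  then show ?thesis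
    using ab I J kphi_in_kzs_iff[OF I J IJ x] by (simp add: kzero_point_def kpsiD_def)
qed

lemma eqgen_krelU_kzero_point: "(a, b) \<in> eqgen (krelU K) \<Longrightarrow> kzero_point K a = kzero_point K b"
  by (rule eqgen_invariant[of "krelU K"]) (rule krelU_kzero_point)

lemma krelE_on_zero_section:
  assumes "(a, b) \<in> krelE K"
  shows "on_zero_section K a \<longleftrightarrow> on_zero_section K b"
proof -
  obtain I J e where I: "I \<in> kindex K" and J: "J \<in> kindex K" and IJ: "I \<subset> J"
    and e: "e \<in> topspace (kE K I)" "kpr K I e \<in> kUU K I J" and ab: "a = (I, e)" "b = (J, kPhi K I J e)"
    using assms unfolding krelE_def by blast
  have pe: "kpr K I e \<in> topspace (kU K I)"
    using e(1) continuous_map_kpr[OF I] by (auto dest: continuous_map_image_subset_topspace)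
  have "kzero K I (kpr K I e) \<in> {e \<in> topspace (kE K I). kpr K I e \<in> kUU K I J}"
    using e pe continuous_map_kzero[OF I] kpr_kzero[OF I]
    by (auto dest: continuous_map_image_subset_topspace)
  then have "kPhi K I J (kzero K I (kpr K I e)) = kPhi K I J e \<longleftrightarrow> kzero K I (kpr K I e) = e"
    using e by (intro inj_on_eq_iff[OF inj_on_kPhi[OF I J IJ]]) auto
  then show ?thesis
    using ab e kpr_kPhi[OF I J IJ] kzero_kphi[OF I J IJ] by (simp add: on_zero_section_def)
qed

lemma eqgen_krelE_on_zero_section:
  "(a, b) \<in> eqgen (krelE K) \<Longrightarrow> on_zero_section K a \<longleftrightarrow> on_zero_section K b"
  by (rule eqgen_invariant[of "krelE K"]) (rule krelE_on_zero_section)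

lemma krelE_kprD: "(a, b) \<in> krelE K \<Longrightarrow> (kprD K a, kprD K b) \<in> krelU K"
  unfolding krelE_def krelU_def kprD_def using kpr_kPhi by fastforce

lemma krelU_kzeroD: "(a, b) \<in> krelU K \<Longrightarrow> (kzeroD K a, kzeroD K b) \<in> krelE K"
  unfolding krelU_def krelE_def kzeroD_def
  using kzero_kphi kUU_subset kpr_kzero continuous_map_kzero
  by (fastforce dest: continuous_map_image_subset_topspace)

lemma krelU_ksD: "(a, b) \<in> krelU K \<Longrightarrow> (ksD K a, ksD K b) \<in> krelE K"
  unfolding krelU_def krelE_def ksD_def
  using ks_kphi kUU_subset kpr_ks continuous_map_ks
  by (fastforce dest: continuous_map_image_subset_topspace)

lemma kpiK_eq_iff: "kpiK K a = kpiK K b \<longleftrightarrow> (a, b) \<in> eqgen (krelU K)"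
  by (simp add: kpiK_def eqclass_eq_iff)

lemma kpiE_eq_iff: "kpiE K a = kpiE K b \<longleftrightarrow> (a, b) \<in> eqgen (krelE K)"
  by (simp add: kpiE_def eqclass_eq_iff)

lemma kpiK_kprD_eq: "(p, q) \<in> eqgen (krelE K) \<Longrightarrow> kpiK K (kprD K p) = kpiK K (kprD K q)"
  unfolding kpiK_eq_iff by (erule eqgen_map[where C="krelU K", rotated]) (blast dest: krelE_kprD)

lemma kpiE_kzeroD_eq: "(p, q) \<in> eqgen (krelU K) \<Longrightarrow> kpiE K (kzeroD K p) = kpiE K (kzeroD K q)"
  unfolding kpiE_eq_iff by (erule eqgen_map[where C="krelE K", rotated]) (blast dest: krelU_kzeroD)

lemma kpiE_ksD_eq: "(p, q) \<in> eqgen (krelU K) \<Longrightarrow> kpiE K (ksD K p) = kpiE K (ksD K q)"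
  unfolding kpiE_eq_iff by (erule eqgen_map[where C="krelE K", rotated]) (blast dest: krelU_ksD)

lemma kprV_kpiE: "kprV K (kpiE K p) = kpiK K (kprD K p)"
  unfolding kprV_def kpiE_def
  by (rule kpiK_kprD_eq[OF eqgen_sym[OF eqgen_some_eqclass]])

lemma kzeroV_kpiK: "kzeroV K (kpiK K p) = kpiE K (kzeroD K p)"
  unfolding kzeroV_def kpiK_def
  by (rule kpiE_kzeroD_eq[OF eqgen_sym[OF eqgen_some_eqclass]])

lemma ksV_kpiK: "ksV K (kpiK K p) = kpiE K (ksD K p)"
  unfolding ksV_def kpiK_def
  by (rule kpiE_ksD_eq[OF eqgen_sym[OF eqgen_some_eqclass]])

lemma continuous_map_kprV: "continuous_map (kvirtE K) (kvirt K) (kprV K)"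
  unfolding kvirtE_def kvirt_def
proof (rule continuous_map_between_qtops)
  show "continuous_map (kdisjE K) (kdisjU K) (kprD K)"
    unfolding kdisjE_def kdisjU_def kprD_def by (rule continuous_map_sum_map) (rule continuous_map_kpr)
qed (rule kprV_kpiE)

lemma continuous_map_kzeroV: "continuous_map (kvirt K) (kvirtE K) (kzeroV K)"
  unfolding kvirt_def kvirtE_def
proof (rule continuous_map_between_qtops)
  show "continuous_map (kdisjU K) (kdisjE K) (kzeroD K)"
    unfolding kdisjE_def kdisjU_def kzeroD_def by (rule continuous_map_sum_map) (rule continuous_map_kzero)
qed (rule kzeroV_kpiK)

lemma continuous_map_ksV: "continuous_map (kvirt K) (kvirtE K) (ksV K)"
  unfolding kvirt_def kvirtE_def
proof (rule continuous_map_between_qtops)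
  show "continuous_map (kdisjU K) (kdisjE K) (ksD K)"
    unfolding kdisjE_def kdisjU_def ksD_def by (rule continuous_map_sum_map) (rule continuous_map_ks)
qed (rule ksV_kpiK)

lemma kprV_ksV: "c \<in> topspace (kvirt K) \<Longrightarrow> kprV K (ksV K c) = c"
  by (auto simp: topspace_kvirt topspace_kdisjU ksV_kpiK kprV_kpiE kprD_def ksD_def kpr_ks)

lemma kprV_kzeroV: "c \<in> topspace (kvirt K) \<Longrightarrow> kprV K (kzeroV K c) = c"
  by (auto simp: topspace_kvirt topspace_kdisjU kzeroV_kpiK kprV_kpiE kprD_def kzeroD_def kpr_kzero)

lemma ksV_eq_kzeroV_iff:
  assumes "c \<in> topspace (kvirt K)"
  shows "ksV K c = kzeroV K c \<longleftrightarrow> c \<in> kpiK K ` kzeros K"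
proof -
  obtain I x where c: "c = kpiK K (I, x)" and I: "I \<in> kindex K" and x: "x \<in> topspace (kU K I)"
    using assms by (auto simp: topspace_kvirt topspace_kdisjU)
  have "ksV K c = kzeroV K c \<longleftrightarrow> ((I, ks K I x), (I, kzero K I x)) \<in> eqgen (krelE K)"
    by (simp add: c ksV_kpiK kzeroV_kpiK ksD_def kzeroD_def kpiE_eq_iff)
  also have "\<dots> \<longleftrightarrow> x \<in> kzs K I"
  proof
    assume "((I, ks K I x), (I, kzero K I x)) \<in> eqgen (krelE K)"
    moreover have "on_zero_section K (I, kzero K I x)"
      using x by (simp add: on_zero_section_def kpr_kzero[OF I])
    ultimately have "on_zero_section K (I, ks K I x)"
      using eqgen_krelE_on_zero_section by blast
    then show "x \<in> kzs K I"
      using x by (simp add: on_zero_section_def kpr_ks[OF I] zset_def)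
  qed (simp add: zset_def)
  also have "\<dots> \<longleftrightarrow> c \<in> kpiK K ` kzeros K"
  proof
    assume "c \<in> kpiK K ` kzeros K"
    then obtain J y where "J \<in> kindex K" "y \<in> kzs K J" "c = kpiK K (J, y)"
      by blast
    then show "x \<in> kzs K I"
      using eqgen_krelU_kzero_point[of "(I, x)" "(J, y)"] c I
      by (auto simp: kpiK_eq_iff kzero_point_def split: if_splits)
  qed (use c I in blast)
  finally show ?thesis .
qed

lemma kpiK_kzeros_subset: "kpiK K ` kzeros K \<subseteq> topspace (kvirt K)"
  using zset_subset by (force simp: topspace_kvirt topspace_kdisjU)

lemma kzero_set_eq: "{c \<in> topspace (kvirt K). ksV K c = kzeroV K c} = kpiK K ` kzeros K"
  using ksV_eq_kzeroV_iff kpiK_kzeros_subset by blast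

section \<open>The embedding of X\<close>

lemma kpsiD_in_topspace: "a \<in> kzeros K \<Longrightarrow> kpsiD K a \<in> topspace X"
  using kpsi_in_footprint openin_subset[OF openin_footprint] by (auto simp: kpsiD_def)

lemma kzero_lift_eqgen_of_subset:
  assumes I: "I \<in> kindex K" and L: "L \<in> kindex K" and IL: "I \<subseteq> L"
    and p: "p \<in> kF K I" "p \<in> kF K L"
  shows "(kzero_lift K I p, kzero_lift K L p) \<in> eqgen (krelZ K)"
proof (cases "I = L")
  case False
  with IL have IL': "I \<subset> L"
    by blast
  define x where "x = inv_into (kzs K I) (kpsi K I) p"
  have x: "x \<in> kzs K I" "kpsi K I x = p"
    using kzero_lift_in_kzeros[OF I p(1)] kzero_point_kzero_lift[OF I p(1)]
    by (simp_all add: x_def kzero_lift_def kzero_point_def kpsiD_def)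
  then have xU: "x \<in> kUU K I L"
    using kUU_kzs_iff[OF I L IL'] p(2) by simp
  then have "(kzero_lift K I p, kzero_lift K L p) \<in> krelZ K"
    using I L IL' x kphi_kzs[OF I L IL'] unfolding krelZ_def kzero_lift_def x_def by auto
  then show ?thesis
    by blast
qed simp

text \<open>Two charts at p are joined through the chart indexed by their union, whose footprint is the
  intersection of theirs.\<close>
lemma kzero_lift_eqgen:
  assumes I: "I \<in> kindex K" and J: "J \<in> kindex K" and p: "p \<in> kF K I" "p \<in> kF K J"
  shows "(kzero_lift K I p, kzero_lift K J p) \<in> eqgen (krelZ K)"
proof -
  have pIJ: "p \<in> (\<Inter>i\<in>I \<union> J. kF K {i})"
    using footprint_eq[OF I] footprint_eq[OF J] p by auto
  then have IJ: "I \<union> J \<in> kindex K"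
    using I J by (auto simp: kindex_def)
  with pIJ have "p \<in> kF K (I \<union> J)"
    using footprint_eq by blast
  then have "(kzero_lift K I p, kzero_lift K (I \<union> J) p) \<in> eqgen (krelZ K)"
       "(kzero_lift K J p, kzero_lift K (I \<union> J) p) \<in> eqgen (krelZ K)"
    using kzero_lift_eqgen_of_subset I J IJ p by auto
  then show ?thesis
    using eqgen_sym rtrancl_trans by metis
qed

lemma kiotaI_eq:
  "I \<in> kindex K \<Longrightarrow> J \<in> kindex K \<Longrightarrow> p \<in> kF K I \<Longrightarrow> p \<in> kF K J \<Longrightarrow> kiotaI K I p = kiotaI K J p"
  unfolding kiotaI_alt_def kpiK_eq_iff by (rule subsetD[OF eqgen_krelZ_subset kzero_lift_eqgen])

lemma kiota_eq:
  assumes I: "I \<in> kindex K" and p: "p \<in> kF K I"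
  shows "kiota K p = kpiK K (kzero_lift K I p)"
proof -
  have "p \<in> topspace X"
    using p openin_subset[OF openin_footprint[OF I]] by blast
  then have "kiotaI K (kchart_at K p) p = kiotaI K I p"
    using kchart_at I p kiotaI_eq by blast
  then show ?thesis
    by (simp add: kiota_alt_def kiotaI_alt_def)
qed

lemma continuous_map_via_kzero_lift:
  assumes f: "continuous_map (kdisjZ K) Y f"
    and f_eq: "\<And>a b. (a, b) \<in> eqgen (krelZ K) \<Longrightarrow> f a = f b"
  shows "continuous_map X Y (\<lambda>p. f (kzero_lift K (kchart_at K p) p))"
proof (rule pasting_lemma[where T="kF K" and f="\<lambda>I p. f (kzero_lift K I p)"])
  show "openin X (kF K I)" if "I \<in> kindex K" for I
    using that by (rule openin_footprint)
  show "continuous_map (subtopology X (kF K I)) Y (\<lambda>p. f (kzero_lift K I p))" if "I \<in> kindex K" for I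
    using continuous_map_compose[OF continuous_map_kzero_lift[OF that] f] by (simp add: o_def)
  show "f (kzero_lift K I p) = f (kzero_lift K J p)"
    if "I \<in> kindex K" "J \<in> kindex K" "p \<in> topspace X \<inter> kF K I \<inter> kF K J" for I J p
    using that by (auto intro: f_eq kzero_lift_eqgen)
  show "\<exists>I. I \<in> kindex K \<and> p \<in> kF K I \<and> f (kzero_lift K (kchart_at K p) p) = f (kzero_lift K I p)"
    if "p \<in> topspace X" for p
    using kchart_at[OF that] by blast
qed

lemma continuous_map_kpiK_kdisjZ: "continuous_map (kdisjZ K) (kvirt K) (kpiK K)"
  unfolding kdisjZ_def kvirt_def by (rule continuous_map_from_subtopology[OF continuous_map_qtop])

lemma continuous_map_kiota: "continuous_map X (kvirt K) (kiota K)"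
  unfolding kiota_alt_def
  by (rule continuous_map_via_kzero_lift[OF continuous_map_kpiK_kdisjZ])
     (use eqgen_krelZ_subset in \<open>auto simp: kpiK_eq_iff\<close>)

lemma kiota_image: "A \<subseteq> topspace X \<Longrightarrow> kiota K ` A = kpiK K ` {a \<in> kzeros K. kpsiD K a \<in> A}"
proof (intro equalityI subsetI)
  fix c assume "A \<subseteq> topspace X" "c \<in> kiota K ` A"
  then obtain p where p: "p \<in> A" "p \<in> topspace X" "c = kiota K p"
    by blast
  define a where "a = kzero_lift K (kchart_at K p) p"
  have "a \<in> kzeros K" "kzero_point K a = Some p"
    using kchart_at[OF p(2)] kzero_lift_in_kzeros kzero_point_kzero_lift by (simp_all add: a_def)
  then have "a \<in> {a \<in> kzeros K. kpsiD K a \<in> A}"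
    using p(1) by (simp add: kzero_point_def)
  moreover have "c = kpiK K a"
    using p(3) by (simp add: a_def kiota_alt_def)
  ultimately show "c \<in> kpiK K ` {a \<in> kzeros K. kpsiD K a \<in> A}"
    by blast
next
  fix c assume "c \<in> kpiK K ` {a \<in> kzeros K. kpsiD K a \<in> A}"
  then obtain I x where I: "I \<in> kindex K" and x: "x \<in> kzs K I" "kpsi K I x \<in> A"
    and c: "c = kpiK K (I, x)"
    by (auto simp: kpsiD_def)
  then show "c \<in> kiota K ` A"
    using kiota_eq[OF I kpsi_in_footprint[OF I x(1)]] kzero_lift_kpsi[OF I x(1)] by force
qed

lemma inj_on_kiota: "inj_on (kiota K) (topspace X)"
proof (rule inj_onI)
  fix p q assume p: "p \<in> topspace X" and q: "q \<in> topspace X" and eq: "kiota K p = kiota K q"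
  then have "kzero_point K (kzero_lift K (kchart_at K p) p) = kzero_point K (kzero_lift K (kchart_at K q) q)"
    using eqgen_krelU_kzero_point by (simp add: kiota_alt_def kpiK_eq_iff)
  then show "p = q"
    using kzero_point_kzero_lift kchart_at[OF p] kchart_at[OF q] by simp
qed

lemma closedin_kpsiD_vimage:
  assumes "closedin X C"
  shows "closedin (kdisjU K) {a \<in> kzeros K. kpsiD K a \<in> C}"
proof -
  have "continuous_map (kdisjZ K) X (kpsiD K)"
    unfolding kdisjZ_sum_topology kpsiD_def
    by (rule continuous_map_from_sum_topology)
       (use homeomorphic_imp_continuous_map[OF homeomorphic_map_kpsi] in
         \<open>simp add: continuous_map_in_subtopology\<close>)
  then have "closedin (kdisjZ K) {a \<in> topspace (kdisjZ K). kpsiD K a \<in> C}"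
    using assms by (rule closedin_continuous_map_preimage)
  then have "closedin (kdisjZ K) {a \<in> kzeros K. kpsiD K a \<in> C}"
    by (simp add: topspace_kdisjZ)
  moreover have "closedin (kdisjU K) (kzeros K)"
    unfolding kdisjU_def closedin_disjoint_union using closedin_kzs by blast
  ultimately show ?thesis
    unfolding kdisjZ_def by (rule closedin_trans_full)
qed

text \<open>The zeros whose footprint point lies outside W form a closed set that is saturated, the
  footprint point being invariant; so its image is closed in the quotient.\<close>
lemma open_map_kiota: "open_map X (subtopology (kvirt K) (kpiK K ` kzeros K)) (kiota K)"
  unfolding open_map_def
proof (intro allI impI)
  fix W assume W: "openin X W"
  define Q where "Q = {a \<in> kzeros K. kpsiD K a \<in> topspace X - W}"
  have sat: "a \<in> Q" if "kpiK K a = kpiK K b" "b \<in> Q" for a b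
  proof -
    have "kzero_point K a = Some (kpsiD K b)"
      using that eqgen_krelU_kzero_point by (simp add: kpiK_eq_iff Q_def kzero_point_def)
    with that(2) show "a \<in> Q"
      by (simp add: Q_def kzero_point_eq_Some)
  qed
  have "closedin (kvirt K) (kpiK K ` Q)"
    unfolding kvirt_def
  proof (rule closedin_qtop_saturated)
    show "closedin (kdisjU K) Q"
      unfolding Q_def using W by (intro closedin_kpsiD_vimage) auto
  qed (rule sat)
  moreover have "kiota K ` W = kpiK K ` kzeros K \<inter> (topspace (kvirt K) - kpiK K ` Q)"
  proof -
    have "{a \<in> kzeros K. kpsiD K a \<in> W} = kzeros K - Q"
      using kpsiD_in_topspace by (auto simp: Q_def)
    then have "kiota K ` W = kpiK K ` (kzeros K - Q)"
      using kiota_image[OF openin_subset[OF W]] by simp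
    also have "\<dots> = kpiK K ` kzeros K - kpiK K ` Q"
      using sat by (rule image_diff_saturated)
    finally show ?thesis
      using kpiK_kzeros_subset by (simp add: Int_absorb2 flip: Int_Diff)
  qed
  ultimately show "openin (subtopology (kvirt K) (kpiK K ` kzeros K)) (kiota K ` W)"
    by (simp add: openin_subtopology_Int2 openin_diff)
qed

lemma homeomorphic_map_kiota: "homeomorphic_map X (subtopology (kvirt K) (kpiK K ` kzeros K)) (kiota K)"
proof (rule bijective_open_imp_homeomorphic_map)
  have img: "kiota K ` topspace X = kpiK K ` kzeros K"
    using kiota_image[of "topspace X"] kpsiD_in_topspace by auto
  then show "continuous_map X (subtopology (kvirt K) (kpiK K ` kzeros K)) (kiota K)"
    using continuous_map_kiota by (simp add: continuous_map_in_subtopology flip: image_subset_iff_funcset)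
  show "kiota K ` topspace X = topspace (subtopology (kvirt K) (kpiK K ` kzeros K))"
    using img kpiK_kzeros_subset by auto
qed (rule open_map_kiota, rule inj_on_kiota)

lemma eqgen_krelU_Image_eqclass_krelZ: "eqgen (krelU K) `` eqclass (krelZ K) a = kpiK K a"
proof (intro equalityI subsetI)
  fix y assume "y \<in> eqgen (krelU K) `` eqclass (krelZ K) a"
  then obtain z where "(a, z) \<in> eqgen (krelZ K)" "(z, y) \<in> eqgen (krelU K)"
    by auto
  then show "y \<in> kpiK K a"
    using eqgen_krelZ_subset by (auto simp: kpiK_def intro: rtrancl_trans)
qed (auto simp: kpiK_def)

lemma kquotZ_lift_image:
  "(\<lambda>p. eqclass (krelZ K) (kzero_lift K (kchart_at K p) p)) ` topspace X = topspace (kquotZ K)"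
proof (intro equalityI subsetI)
  fix c assume "c \<in> (\<lambda>p. eqclass (krelZ K) (kzero_lift K (kchart_at K p) p)) ` topspace X"
  then show "c \<in> topspace (kquotZ K)"
    using kchart_at kzero_lift_in_kzeros by (auto simp: kquotZ_def topspace_qtop topspace_kdisjZ)
next
  fix c assume "c \<in> topspace (kquotZ K)"
  then obtain I x where I: "I \<in> kindex K" and x: "x \<in> kzs K I" and c: "c = eqclass (krelZ K) (I, x)"
    by (auto simp: kquotZ_def topspace_qtop topspace_kdisjZ)
  define p where "p = kpsi K I x"
  have p: "p \<in> topspace X" "p \<in> kF K I"
    using kpsiD_in_topspace[of "(I, x)"] kpsi_in_footprint[OF I x] I x by (simp_all add: p_def kpsiD_def)
  have "eqclass (krelZ K) (kzero_lift K (kchart_at K p) p) = eqclass (krelZ K) (kzero_lift K I p)"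
    using kchart_at[OF p(1)] I p(2) kzero_lift_eqgen by (simp add: eqclass_eq_iff)
  also have "\<dots> = c"
    using kzero_lift_kpsi[OF I x] by (simp add: c p_def)
  finally show "c \<in> (\<lambda>p. eqclass (krelZ K) (kzero_lift K (kchart_at K p) p)) ` topspace X"
    using p(1) by blast
qed

lemma homeomorphic_map_kquotZ: "homeomorphic_map (kquotZ K)
    (subtopology (kvirt K) (kpiK K ` kzeros K)) (\<lambda>c. eqgen (krelU K) `` c)"
proof (rule homeomorphic_map_of_factor)
  let ?h = "\<lambda>p. eqclass (krelZ K) (kzero_lift K (kchart_at K p) p)"
  show "continuous_map X (kquotZ K) ?h"
    unfolding kquotZ_def
    by (rule continuous_map_via_kzero_lift[OF continuous_map_qtop]) (simp add: eqclass_eq_iff)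
  show "?h ` topspace X = topspace (kquotZ K)"
    by (rule kquotZ_lift_image)
  show "continuous_map (kquotZ K) (subtopology (kvirt K) (kpiK K ` kzeros K)) (\<lambda>c. eqgen (krelU K) `` c)"
    unfolding kquotZ_def
  proof (rule continuous_map_from_qtop)
    show "continuous_map (kdisjZ K) (subtopology (kvirt K) (kpiK K ` kzeros K)) (kpiK K)"
      using continuous_map_kpiK_kdisjZ by (auto simp: continuous_map_in_subtopology topspace_kdisjZ)
  qed (rule eqgen_krelU_Image_eqclass_krelZ)
  show "homeomorphic_map X (subtopology (kvirt K) (kpiK K ` kzeros K)) ((\<lambda>c. eqgen (krelU K) `` c) \<circ> ?h)"
    using homeomorphic_map_kiota
    by (rule homeomorphic_map_eq) (simp add: kiota_alt_def eqgen_krelU_Image_eqclass_krelZ)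
qed

end

theorem mainTheorem2:
  fixes X :: "'x topology" and K :: "('x, 'u, 'e) katlas"
  assumes "compact_space X" and "metrizable_space X"
    and "top_kuranishi_atlas X K"
  defines "Z \<equiv> {c \<in> topspace (kvirt K). ksV K c = kzeroV K c}"
  shows
    "(\<forall>p\<in>topspace (kdisjE K). \<forall>q\<in>topspace (kdisjE K).
        (p, q) \<in> (krelE K \<union> converse (krelE K))\<^sup>* \<longrightarrow> kpiK K (kprD K p) = kpiK K (kprD K q))
   \<and> (\<forall>p\<in>topspace (kdisjU K). \<forall>q\<in>topspace (kdisjU K).
        (p, q) \<in> (krelU K \<union> converse (krelU K))\<^sup>* \<longrightarrow>
          kpiE K (kzeroD K p) = kpiE K (kzeroD K q) \<and> kpiE K (ksD K p) = kpiE K (ksD K q))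
   \<and> continuous_map (kvirtE K) (kvirt K) (kprV K)
   \<and> continuous_map (kvirt K) (kvirtE K) (kzeroV K)
   \<and> continuous_map (kvirt K) (kvirtE K) (ksV K)
   \<and> (\<forall>c\<in>topspace (kvirt K). kprV K (ksV K c) = c \<and> kprV K (kzeroV K c) = c)
   \<and> Z = kpiK K ` (SIGMA I:kindex K. kzs K I)
   \<and> homeomorphic_map (kquotZ K) (subtopology (kvirt K) Z) (\<lambda>c. (krelU K \<union> converse (krelU K))\<^sup>* `` c)
   \<and> (\<forall>p\<in>topspace X. \<forall>I\<in>kindex K. \<forall>J\<in>kindex K.
        p \<in> kF K I \<longrightarrow> p \<in> kF K J \<longrightarrow> kiotaI K I p = kiotaI K J p)
   \<and> homeomorphic_map X (subtopology (kvirt K) Z) (kiota K)"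
proof -
  interpret top_katlas X K
    by unfold_locales (rule assms(3))
  have Z: "Z = kpiK K ` kzeros K"
    unfolding Z_def by (rule kzero_set_eq)
  show ?thesis
    unfolding Z
    by (intro conjI ballI impI kpiK_kprD_eq kpiE_kzeroD_eq kpiE_ksD_eq
          kprV_ksV kprV_kzeroV kiotaI_eq
          continuous_map_kprV continuous_map_kzeroV continuous_map_ksV
          homeomorphic_map_kquotZ homeomorphic_map_kiota refl)
       assumption+
qed

end
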